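(* Let $Q$ be a $*$-left Ehresmann monoid with semilattice of projections $E$ and proper basis $H$, and let $T=Q/\sigma$, writing $[m]$ for the $\sigma$-class of $m$. For $[m]\in T$ and $e\in E$ declare $[m]\cdot e$ defined iff there is $h\in H$ with $h\,\sigma\,m$ and $h^*\ge e$, and then set $[m]\cdot e=(he)^+$. Then: (a) if $h,k\in H$, $e\in E$, $h\,\sigma\,k$ and $h^*,k^*\ge e$, then $he=ke$, so $[m]\cdot e$ is well defined; (b) $(E,\cdot)$ is a strong, order-preserving partial action of $T$ on the semilattice $E$; (c) for every $[t]\in T$ there is $e\in E$ such that $[t]\cdot e$ is defined.
   Context: A $*$-left Ehresmann monoid is a monoid $M$ with unary operations $+,*$ satisfying $x^+x=x$, $(x^+y^+)^+=x^+y^+$, $x^+y^+=y^+x^+$, $(xy)^+=(xy^+)^+$, $xx^*=x$, $(x^* )^*=x^*$, $x^*y^*=y^*x^*$, $(xy^* )^*y^*=(xy^* )^*$, $(x^* )^+=x^*$, $(x^+)^*=x^+$; $E=\{a^+\}=\{a^*\}$, ordered by $e\le f$ iff $ef=e$; $\sigma$ is the least monoid congruence containing $E\times E$. $H\subseteq M$ is atomic if: (H1) $E\subseteq H$; (H2) $h\in H,e\in E$ imply $he\in H$ and $(he)^*=h^*e$; (H3) if $h\in H$, $k\in H\setminus E$, $h^*\ge k^+$ then $hk\in H$ and $(hk)^*=k^*$; (H4) every $m$ is $\sigma$-related to some $h\in H$; (H5) if $h,k,w\in H$, $hk\,\sigma\,w$, $k^*=w^*$, then some $u\in H$ has $u\,\sigma\,h$,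 $u^*\ge k^+$. $H$ is proper if ($h^*=k^*$ and $h\,\sigma\,k$) iff $h=k$. $h_1\cdots h_n$ is in $H$-canonical form if $h_i^*<h_{i+1}^+$ ($1\le i<n$) and $h_i\notin E$ ($2\le i\le n$); $M$ has $H$-canonical forms if each element has exactly one such expression. A proper basis is a proper atomic generating set $H$ (as a semigroup) for which $M$ has $H$-canonical forms. A partial action of a monoid $T$ on a set $X$ is a partial map $(t,x)\mapsto t\cdot x$ with $1\cdot x=x$ always defined, and $t\cdot x$, $s\cdot(t\cdot x)$ defined implying $st\cdot x$ defined and equal to $s\cdot(t\cdot x)$; it is strong if $t\cdot x$ and $st\cdot x$ defined imply $s\cdot(t\cdot x)$ defined; order-preserving if $x\le y$ and $t\cdot y$ defined imply $t\cdot x$ defined and $t\cdot x\le t\cdot y$. *)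

theory Defs
  imports Main
begin

text \<open>A *-left Ehresmann monoid whose underlying set is the whole type 'a,
  with multiplication m, identity one, and unary operations pl (plus) and st (star).\<close>

definition star_left_ehresmann ::
  "('a \<Rightarrow> 'a \<Rightarrow> 'a) \<Rightarrow> 'a \<Rightarrow> ('a \<Rightarrow> 'a) \<Rightarrow> ('a \<Rightarrow> 'a) \<Rightarrow> bool" where
  "star_left_ehresmann m one pl st \<longleftrightarrow>
     (\<forall>x y z. m (m x y) z = m x (m y z)) \<and>
     (\<forall>x. m one x = x \<and> m x one = x) \<and>
     (\<forall>x. m (pl x) x = x) \<and>
     (\<forall>x y. pl (m (pl x) (pl y)) = m (pl x) (pl y)) \<and>
     (\<forall>x y. m (pl x) (pl y) = m (pl y) (pl x)) \<and>
     (\<forall>x y. pl (m x y) = pl (m x (pl y))) \<and>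
     (\<forall>x. m x (st x) = x) \<and>
     (\<forall>x. st (st x) = st x) \<and>
     (\<forall>x y. m (st x) (st y) = m (st y) (st x)) \<and>
     (\<forall>x y. m (st (m x (st y))) (st y) = st (m x (st y))) \<and>
     (\<forall>x. pl (st x) = st x) \<and>
     (\<forall>x. st (pl x) = pl x)"

definition projs :: "('a \<Rightarrow> 'a) \<Rightarrow> 'a set" where
  "projs pl = range pl"

definition ple :: "('a \<Rightarrow> 'a \<Rightarrow> 'a) \<Rightarrow> 'a \<Rightarrow> 'a \<Rightarrow> bool" where
  "ple m e f \<longleftrightarrow> m e f = e"

definition monoid_congruence :: "('a \<Rightarrow> 'a \<Rightarrow> 'a) \<Rightarrow> ('a \<times> 'a) set \<Rightarrow> bool" where
  "monoid_congruence m R \<longleftrightarrow> equiv UNIV R \<and>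
     (\<forall>a b c d. (a, b) \<in> R \<longrightarrow> (c, d) \<in> R \<longrightarrow> (m a c, m b d) \<in> R)"

definition sigma :: "('a \<Rightarrow> 'a \<Rightarrow> 'a) \<Rightarrow> ('a \<Rightarrow> 'a) \<Rightarrow> ('a \<times> 'a) set" where
  "sigma m pl = \<Inter> {R. monoid_congruence m R \<and> projs pl \<times> projs pl \<subseteq> R}"

text \<open>Atomic subsets (H1)-(H5).\<close>
definition atomic ::
  "('a \<Rightarrow> 'a \<Rightarrow> 'a) \<Rightarrow> ('a \<Rightarrow> 'a) \<Rightarrow> ('a \<Rightarrow> 'a) \<Rightarrow> 'a set \<Rightarrow> bool" where
  "atomic m pl st H \<longleftrightarrow>
     projs pl \<subseteq> H \<and>
     (\<forall>h\<in>H. \<forall>e\<in>projs pl. m h e \<in> H \<and> st (m h e) = m (st h) e) \<and>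
     (\<forall>h\<in>H. \<forall>k\<in>H - projs pl. ple m (pl k) (st h) \<longrightarrow>
         m h k \<in> H \<and> st (m h k) = st k) \<and>
     (\<forall>x. \<exists>h\<in>H. (x, h) \<in> sigma m pl) \<and>
     (\<forall>h\<in>H. \<forall>k\<in>H. \<forall>w\<in>H. (m h k, w) \<in> sigma m pl \<and> st k = st w \<longrightarrow>
         (\<exists>u\<in>H. (u, h) \<in> sigma m pl \<and> ple m (pl k) (st u)))"

definition proper :: "('a \<Rightarrow> 'a \<Rightarrow> 'a) \<Rightarrow> ('a \<Rightarrow> 'a) \<Rightarrow> ('a \<Rightarrow> 'a) \<Rightarrow> 'a set \<Rightarrow> bool" where
  "proper m pl st H \<longleftrightarrow>
     (\<forall>h\<in>H. \<forall>k\<in>H. (st h = st k \<and> (h, k) \<in> sigma m pl) \<longleftrightarrow> h = k)"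

fun lprod :: "('a \<Rightarrow> 'a \<Rightarrow> 'a) \<Rightarrow> 'a list \<Rightarrow> 'a" where
  "lprod m [] = undefined"
| "lprod m [x] = x"
| "lprod m (x # y # ys) = m x (lprod m (y # ys))"

definition canonical_form ::
  "('a \<Rightarrow> 'a \<Rightarrow> 'a) \<Rightarrow> ('a \<Rightarrow> 'a) \<Rightarrow> ('a \<Rightarrow> 'a) \<Rightarrow> 'a set \<Rightarrow> 'a list \<Rightarrow> bool" where
  "canonical_form m pl st H hs \<longleftrightarrow> hs \<noteq> [] \<and> set hs \<subseteq> H \<and>
     (\<forall>i. Suc i < length hs \<longrightarrow>
        ple m (st (hs ! i)) (pl (hs ! Suc i)) \<and> st (hs ! i) \<noteq> pl (hs ! Suc i)) \<and>
     (\<forall>i. 0 < i \<and> i < length hs \<longrightarrow> hs ! i \<notin> projs pl)"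

definition proper_basis ::
  "('a \<Rightarrow> 'a \<Rightarrow> 'a) \<Rightarrow> ('a \<Rightarrow> 'a) \<Rightarrow> ('a \<Rightarrow> 'a) \<Rightarrow> 'a set \<Rightarrow> bool" where
  "proper_basis m pl st H \<longleftrightarrow>
     atomic m pl st H \<and> proper m pl st H \<and>
     (\<forall>x. \<exists>hs. hs \<noteq> [] \<and> set hs \<subseteq> H \<and> lprod m hs = x) \<and>
     (\<forall>x. \<exists>!hs. canonical_form m pl st H hs \<and> lprod m hs = x)"

definition qclass :: "('a \<times> 'a) set \<Rightarrow> 'a \<Rightarrow> 'a set" where
  "qclass R x = R `` {x}"

definition qmul :: "('a \<Rightarrow> 'a \<Rightarrow> 'a) \<Rightarrow> ('a \<times> 'a) set \<Rightarrow> 'a set \<Rightarrow> 'a set \<Rightarrow> 'a set" where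
  "qmul m R A B = qclass R (m (SOME a. a \<in> A) (SOME b. b \<in> B))"

definition partial_action ::
  "'t set \<Rightarrow> ('t \<Rightarrow> 't \<Rightarrow> 't) \<Rightarrow> 't \<Rightarrow> 'x set \<Rightarrow> ('t \<Rightarrow> 'x \<Rightarrow> 'x option) \<Rightarrow> bool" where
  "partial_action T tm tone X act \<longleftrightarrow>
     (\<forall>t\<in>T. \<forall>x\<in>X. \<forall>y. act t x = Some y \<longrightarrow> y \<in> X) \<and>
     (\<forall>x\<in>X. act tone x = Some x) \<and>
     (\<forall>s\<in>T. \<forall>t\<in>T. \<forall>x\<in>X. \<forall>y z. act t x = Some y \<longrightarrow> act s y = Some z \<longrightarrow>
         act (tm s t) x = Some z)"

definition strong_partial_action ::
  "'t set \<Rightarrow> ('t \<Rightarrow> 't \<Rightarrow> 't) \<Rightarrow> 't \<Rightarrow> 'x set \<Rightarrow> ('t \<Rightarrow> 'x \<Rightarrow> 'x option) \<Rightarrow> bool" where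
  "strong_partial_action T tm tone X act \<longleftrightarrow>
     (\<forall>s\<in>T. \<forall>t\<in>T. \<forall>x\<in>X. \<forall>y. act t x = Some y \<longrightarrow> act (tm s t) x \<noteq> None \<longrightarrow>
         act s y \<noteq> None)"

definition order_preserving_action ::
  "'t set \<Rightarrow> 'x set \<Rightarrow> ('x \<Rightarrow> 'x \<Rightarrow> bool) \<Rightarrow> ('t \<Rightarrow> 'x \<Rightarrow> 'x option) \<Rightarrow> bool" where
  "order_preserving_action T X le act \<longleftrightarrow>
     (\<forall>t\<in>T. \<forall>x\<in>X. \<forall>y\<in>X. \<forall>v. le x y \<longrightarrow> act t y = Some v \<longrightarrow>
         (\<exists>u. act t x = Some u \<and> le u v))"

definition proj_act ::
  "('a \<Rightarrow> 'a \<Rightarrow> 'a) \<Rightarrow> ('a \<Rightarrow> 'a) \<Rightarrow> ('a \<Rightarrow> 'a) \<Rightarrow> 'a set \<Rightarrow> 'a set \<Rightarrow> 'a \<Rightarrow> 'a option" where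
  "proj_act m pl st H X e =
     (if e \<in> projs pl \<and> (\<exists>h\<in>H. h \<in> X \<and> ple m e (st h))
      then Some (pl (m (SOME h. h \<in> H \<and> h \<in> X \<and> ple m e (st h)) e))
      else None)"

end

theory Submission
  imports Defs
begin

text \<open>
  Part (a) is properness: he and ke lie in H by (H2), are sigma-related, and both have star e.
  Hence [t].e = (he)^+ is independent of the representative h, and [t].h^* = h^+
  is always defined.
  For composition, if y = (kx)^+ and z = (hy)^+, then w = h(kx) lies in H with
  w^* = x (by (H2) or (H3)) and is sigma-related to hk, so [hk].x = w^+ = z.
  Strongness uses (H5) to replace the representative of [h] by one whose star lies above y,
  and order preservation is the inequality (ab)^+ \<le> a^+.
\<close>

lemma monoid_congruence_refl: "monoid_congruence m R \<Longrightarrow> (x, x) \<in> R"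
  unfolding monoid_congruence_def equiv_def refl_on_def by blast

lemma monoid_congruence_sym: "monoid_congruence m R \<Longrightarrow> (x, y) \<in> R \<Longrightarrow> (y, x) \<in> R"
  unfolding monoid_congruence_def equiv_def sym_def by blast

lemma monoid_congruence_trans:
  "monoid_congruence m R \<Longrightarrow> (x, y) \<in> R \<Longrightarrow> (y, z) \<in> R \<Longrightarrow> (x, z) \<in> R"
  unfolding monoid_congruence_def equiv_def trans_def by blast

lemma monoid_congruence_mult:
  "monoid_congruence m R \<Longrightarrow> (a, b) \<in> R \<Longrightarrow> (c, d) \<in> R \<Longrightarrow> (m a c, m b d) \<in> R"
  unfolding monoid_congruence_def by blast

lemma monoid_congruence_Inter:
  assumes "\<And>R. R \<in> \<R> \<Longrightarrow> monoid_congruence m R"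
  shows "monoid_congruence m (\<Inter> \<R>)"
  unfolding monoid_congruence_def
proof (intro conjI allI impI equivI refl_onI symI transI InterI)
  fix R assume R: "R \<in> \<R>"
  note congruence = assms[OF R]
  show "(x, x) \<in> R" for x
    using congruence by (rule monoid_congruence_refl)
  show "(y, x) \<in> R" if "(x, y) \<in> \<Inter> \<R>" for x y
    using congruence InterD[OF that R] by (rule monoid_congruence_sym)
  show "(x, z) \<in> R" if "(x, y) \<in> \<Inter> \<R>" "(y, z) \<in> \<Inter> \<R>" for x y z
    using congruence InterD[OF that(1) R] InterD[OF that(2) R] by (rule monoid_congruence_trans)
  show "(m a c, m b d) \<in> R" if "(a, b) \<in> \<Inter> \<R>" "(c, d) \<in> \<Inter> \<R>" for a b c d
    using congruence InterD[OF that(1) R] InterD[OF that(2) R] by (rule monoid_congruence_mult)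
qed simp

lemma sigma_monoid_congruence: "monoid_congruence m (sigma m pl)"
  unfolding sigma_def by (rule monoid_congruence_Inter) blast

lemma projs_sigma: "e \<in> projs pl \<Longrightarrow> f \<in> projs pl \<Longrightarrow> (e, f) \<in> sigma m pl"
  unfolding sigma_def by blast

lemma sigma_refl: "(x, x) \<in> sigma m pl"
  using sigma_monoid_congruence by (rule monoid_congruence_refl)

lemma sigma_sym: "(x, y) \<in> sigma m pl \<Longrightarrow> (y, x) \<in> sigma m pl"
  using sigma_monoid_congruence by (rule monoid_congruence_sym)

lemma sigma_trans: "(x, y) \<in> sigma m pl \<Longrightarrow> (y, z) \<in> sigma m pl \<Longrightarrow> (x, z) \<in> sigma m pl"
  using sigma_monoid_congruence by (rule monoid_congruence_trans)

lemma sigma_mult: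
  "(a, b) \<in> sigma m pl \<Longrightarrow> (c, d) \<in> sigma m pl \<Longrightarrow> (m a c, m b d) \<in> sigma m pl"
  using sigma_monoid_congruence by (rule monoid_congruence_mult)

lemma qclass_iff: "y \<in> qclass R x \<longleftrightarrow> (x, y) \<in> R"
  by (simp add: qclass_def)

lemma qmul_qclass:
  assumes "monoid_congruence m R"
  shows "qmul m R (qclass R a) (qclass R b) = qclass R (m a b)"
proof -
  have equiv: "equiv UNIV R" using assms unfolding monoid_congruence_def by blast
  have "(SOME x. x \<in> qclass R a) \<in> qclass R a" "(SOME x. x \<in> qclass R b) \<in> qclass R b"
    using equiv by (auto intro: someI simp: qclass_def equiv_def refl_on_def)
  then have "(m a b, m (SOME x. x \<in> qclass R a) (SOME x. x \<in> qclass R b)) \<in> R"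
    using assms unfolding monoid_congruence_def qclass_def by blast
  then show ?thesis
    unfolding qmul_def qclass_def by (simp add: equiv_class_eq[OF equiv])
qed

locale star_left_ehresmann_monoid =
  fixes m :: "'a \<Rightarrow> 'a \<Rightarrow> 'a" and one :: 'a and pl st :: "'a \<Rightarrow> 'a"
  assumes star_left_ehresmann: "star_left_ehresmann m one pl st"
begin

abbreviation E where "E \<equiv> projs pl"
abbreviation \<sigma> where "\<sigma> \<equiv> sigma m pl"

lemma mult_assoc: "m (m x y) z = m x (m y z)"
  using star_left_ehresmann unfolding star_left_ehresmann_def by (elim conjE allE) assumption

lemma mult_one: "m x one = x"
  using star_left_ehresmann unfolding star_left_ehresmann_def by (elim conjE allE) assumption

lemma plus_mult_self: "m (pl x) x = x"
  using star_left_ehresmann unfolding star_left_ehresmann_def by (elim conjE allE) assumption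

lemma plus_of_plus_mult_plus: "pl (m (pl x) (pl y)) = m (pl x) (pl y)"
  using star_left_ehresmann unfolding star_left_ehresmann_def by (elim conjE allE) assumption

lemma plus_mult_comm: "m (pl x) (pl y) = m (pl y) (pl x)"
  using star_left_ehresmann unfolding star_left_ehresmann_def by (elim conjE allE) assumption

lemma plus_mult_plus: "pl (m x y) = pl (m x (pl y))"
  using star_left_ehresmann unfolding star_left_ehresmann_def by (elim conjE allE) assumption

lemma mult_star_self: "m x (st x) = x"
  using star_left_ehresmann unfolding star_left_ehresmann_def by (elim conjE allE) assumption

lemma plus_star: "pl (st x) = st x"
  using star_left_ehresmann unfolding star_left_ehresmann_def by (elim conjE allE) assumption

lemma star_plus: "st (pl x) = pl x"
  using star_left_ehresmann unfolding star_left_ehresmann_def by (elim conjE allE) assumption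

lemma projs_iff: "e \<in> E \<longleftrightarrow> pl e = e"
proof
  assume "e \<in> E"
  then obtain x where "e = pl x" by (auto simp: projs_def)
  then show "pl e = e" by (metis star_plus plus_star)
qed (metis projs_def rangeI)

lemma plus_in_projs: "pl x \<in> E"
  by (simp add: projs_def)

lemma star_in_projs: "st x \<in> E"
  by (simp add: projs_iff plus_star)

lemma star_proj: "e \<in> E \<Longrightarrow> st e = e"
  by (metis projs_iff star_plus)

lemma one_in_projs: "one \<in> E"
  by (metis projs_iff plus_mult_self mult_one)

lemma projs_mult_comm: "e \<in> E \<Longrightarrow> f \<in> E \<Longrightarrow> m e f = m f e"
  by (metis projs_iff plus_mult_comm)

lemma projs_mult_idem: "e \<in> E \<Longrightarrow> m e e = e"
  by (metis projs_iff plus_mult_self)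

lemma ple_projs_mult_left: "e \<in> E \<Longrightarrow> f \<in> E \<Longrightarrow> ple m e f \<Longrightarrow> m f e = e"
  by (metis projs_mult_comm ple_def)

lemma ple_refl_projs: "e \<in> E \<Longrightarrow> ple m e e"
  by (simp add: ple_def projs_mult_idem)

lemma plus_mult_le: "ple m (pl (m a b)) (pl a)"
proof -
  have "pl (m a b) = pl (m (pl a) (m a b))"
    by (simp add: plus_mult_self flip: mult_assoc)
  also have "\<dots> = m (pl a) (pl (m a b))"
    by (metis plus_mult_plus plus_of_plus_mult_plus)
  finally show ?thesis
    unfolding ple_def by (metis plus_mult_comm)
qed

lemma sigma_mult_proj:
  assumes "e \<in> E"
  shows "(x, m x e) \<in> \<sigma>"
proof -
  have "(m x one, m x e) \<in> \<sigma>"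
    using assms by (intro sigma_mult sigma_refl projs_sigma one_in_projs)
  then show ?thesis by (simp add: mult_one)
qed

end

locale proper_atomic_subset = star_left_ehresmann_monoid +
  fixes H :: "'a set"
  assumes atomic: "atomic m pl st H"
    and proper: "proper m pl st H"
begin

lemma projs_subset: "E \<subseteq> H"
  using atomic unfolding atomic_def by blast

lemma mult_proj_in: "h \<in> H \<Longrightarrow> e \<in> E \<Longrightarrow> m h e \<in> H"
  using atomic unfolding atomic_def by blast

lemma star_mult_proj: "h \<in> H \<Longrightarrow> e \<in> E \<Longrightarrow> st (m h e) = m (st h) e"
  using atomic unfolding atomic_def by blast

lemma mult_nonproj_closed:
  "h \<in> H \<Longrightarrow> k \<in> H \<Longrightarrow> k \<notin> E \<Longrightarrow> ple m (pl k) (st h) \<Longrightarrow> m h k \<in> H \<and> st (m h k) = st k"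
  using atomic unfolding atomic_def by blast

lemma sigma_representative: obtains h where "h \<in> H" "(x, h) \<in> \<sigma>"
  using atomic unfolding atomic_def by blast

lemma sigma_adjust_star:
  "h \<in> H \<Longrightarrow> k \<in> H \<Longrightarrow> w \<in> H \<Longrightarrow> (m h k, w) \<in> \<sigma> \<Longrightarrow> st k = st w \<Longrightarrow>
    \<exists>u\<in>H. (u, h) \<in> \<sigma> \<and> ple m (pl k) (st u)"
  using atomic unfolding atomic_def by blast

lemma proper_eqI: "h \<in> H \<Longrightarrow> k \<in> H \<Longrightarrow> st h = st k \<Longrightarrow> (h, k) \<in> \<sigma> \<Longrightarrow> h = k"
  using proper unfolding proper_def by blast

lemma star_mult_proj_le: "h \<in> H \<Longrightarrow> e \<in> E \<Longrightarrow> ple m e (st h) \<Longrightarrow> st (m h e) = e"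
  by (simp add: star_mult_proj ple_projs_mult_left star_in_projs)

lemma sigma_restrict_eq:
  assumes "h \<in> H" "k \<in> H" "e \<in> E" "(h, k) \<in> \<sigma>" "ple m e (st h)" "ple m e (st k)"
  shows "m h e = m k e"
proof (rule proper_eqI)
  show "m h e \<in> H" "m k e \<in> H"
    using assms by (simp_all add: mult_proj_in)
  show "st (m h e) = st (m k e)"
    using assms by (simp add: star_mult_proj_le)
  show "(m h e, m k e) \<in> \<sigma>"
    using assms(4) by (rule sigma_mult[OF _ sigma_refl])
qed

lemma proj_act_defined_iff:
  "proj_act m pl st H (qclass \<sigma> t) e \<noteq> None \<longleftrightarrow> e \<in> E \<and> (\<exists>h\<in>H. (t, h) \<in> \<sigma> \<and> ple m e (st h))"
  by (auto simp: proj_act_def qclass_iff)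

text \<open>By sigma_restrict_eq, the representative chosen by SOME in proj_act is irrelevant.\<close>

lemma proj_act_eq:
  assumes h: "h \<in> H" "(t, h) \<in> \<sigma>" and e: "e \<in> E" "ple m e (st h)"
  shows "proj_act m pl st H (qclass \<sigma> t) e = Some (pl (m h e))"
proof -
  let ?P = "\<lambda>h. h \<in> H \<and> h \<in> qclass \<sigma> t \<and> ple m e (st h)"
  have "?P h" using h e by (simp add: qclass_iff)
  then have chosen: "?P (SOME h. ?P h)" by (rule someI)
  then have "(SOME h. ?P h, h) \<in> \<sigma>"
    using h(2) by (blast intro: sigma_trans sigma_sym dest: qclass_iff[THEN iffD1])
  then have "m (SOME h. ?P h) e = m h e"
    using chosen h e by (blast intro: sigma_restrict_eq)
  with \<open>?P h\<close> e show ?thesis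
    unfolding proj_act_def by auto
qed

lemma proj_act_SomeE:
  assumes "proj_act m pl st H (qclass \<sigma> t) e = Some y"
  obtains h where "e \<in> E" "h \<in> H" "(t, h) \<in> \<sigma>" "ple m e (st h)" "y = pl (m h e)"
proof -
  from assms obtain h where "e \<in> E" "h \<in> H" "(t, h) \<in> \<sigma>" "ple m e (st h)"
    using proj_act_defined_iff by blast
  with assms that show ?thesis
    by (simp add: proj_act_eq)
qed

lemma proj_act_star:
  assumes "h \<in> H" "(t, h) \<in> \<sigma>"
  shows "proj_act m pl st H (qclass \<sigma> t) (st h) = Some (pl h)"
  using proj_act_eq[OF assms star_in_projs ple_refl_projs[OF star_in_projs]]
  by (simp add: mult_star_self)

lemma proj_act_one:
  assumes "e \<in> E"
  shows "proj_act m pl st H (qclass \<sigma> one) e = Some e"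
proof -
  have "e \<in> H" "(one, e) \<in> \<sigma>"
    using assms projs_subset by (auto intro: projs_sigma one_in_projs)
  then have "proj_act m pl st H (qclass \<sigma> one) (st e) = Some (pl e)"
    by (rule proj_act_star)
  with assms show ?thesis
    by (metis star_proj projs_iff)
qed

lemma proj_act_some_defined: "\<exists>e\<in>E. proj_act m pl st H (qclass \<sigma> t) e \<noteq> None"
proof -
  obtain h where "h \<in> H" "(t, h) \<in> \<sigma>" by (rule sigma_representative)
  then show ?thesis using proj_act_star star_in_projs by blast
qed

text \<open>If kx is a projection then kx = x and (H2) applies; otherwise (H3) does.\<close>

lemma mult_restrict_in:
  assumes h: "h \<in> H" and k: "k \<in> H" and x: "x \<in> E" "ple m x (st k)"
    and le: "ple m (pl (m k x)) (st h)"
  shows "m h (m k x) \<in> H \<and> st (m h (m k x)) = x"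
proof (cases "m k x \<in> E")
  case True
  then have "m k x = x"
    using star_mult_proj_le[OF k x] by (simp add: star_proj)
  then show ?thesis
    using h x le by (simp add: mult_proj_in star_mult_proj_le projs_iff)
next
  case False
  have "m k x \<in> H" "st (m k x) = x"
    using k x by (simp_all add: mult_proj_in star_mult_proj_le)
  then show ?thesis
    using mult_nonproj_closed[OF h _ False le] by simp
qed

lemma proj_act_comp:
  assumes y: "proj_act m pl st H (qclass \<sigma> b) x = Some y"
    and z: "proj_act m pl st H (qclass \<sigma> a) y = Some z"
  shows "proj_act m pl st H (qclass \<sigma> (m a b)) x = Some z"
proof -
  obtain k where x: "x \<in> E" and k: "k \<in> H" "(b, k) \<in> \<sigma>" "ple m x (st k)"
    and y_eq: "y = pl (m k x)"
    using y by (rule proj_act_SomeE)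
  obtain h where h: "h \<in> H" "(a, h) \<in> \<sigma>" "ple m y (st h)" and z_eq: "z = pl (m h y)"
    using z by (rule proj_act_SomeE)
  let ?w = "m h (m k x)"
  have w: "?w \<in> H" "st ?w = x"
    using mult_restrict_in[OF h(1) k(1) x k(3)] h(3) y_eq by simp_all
  have "(m a b, m h k) \<in> \<sigma>"
    using h(2) k(2) by (rule sigma_mult)
  moreover have "(m h k, ?w) \<in> \<sigma>"
    using sigma_mult_proj[OF x, of "m h k"] by (simp add: mult_assoc)
  ultimately have "(m a b, ?w) \<in> \<sigma>"
    by (rule sigma_trans)
  with w have "proj_act m pl st H (qclass \<sigma> (m a b)) x = Some (pl ?w)"
    using proj_act_star by metis
  also have "pl ?w = z"
    using z_eq y_eq by (simp flip: plus_mult_plus)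
  finally show ?thesis .
qed

text \<open>Strongness is where (H5) is needed: it moves the representative of [a]
  so that its star lies above y.\<close>

lemma proj_act_strong:
  assumes y: "proj_act m pl st H (qclass \<sigma> b) x = Some y"
    and defined: "proj_act m pl st H (qclass \<sigma> (m a b)) x \<noteq> None"
  shows "proj_act m pl st H (qclass \<sigma> a) y \<noteq> None"
proof -
  obtain k where x: "x \<in> E" and k: "k \<in> H" "(b, k) \<in> \<sigma>" "ple m x (st k)"
    and y_eq: "y = pl (m k x)"
    using y by (rule proj_act_SomeE)
  obtain u where u: "u \<in> H" "(m a b, u) \<in> \<sigma>" "ple m x (st u)"
    using defined proj_act_defined_iff by blast
  obtain h where h: "h \<in> H" "(a, h) \<in> \<sigma>"
    by (rule sigma_representative)
  have kx: "m k x \<in> H" "st (m k x) = x" and ux: "m u x \<in> H" "st (m u x) = x"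
    using k u x by (simp_all add: mult_proj_in star_mult_proj_le)
  have "(m h k, u) \<in> \<sigma>"
    using sigma_mult[OF h(2) k(2)] u(2) by (blast intro: sigma_sym sigma_trans)
  then have "(m (m h k) x, m u x) \<in> \<sigma>"
    using sigma_refl by (rule sigma_mult)
  then have "(m h (m k x), m u x) \<in> \<sigma>"
    by (simp add: mult_assoc)
  then obtain h' where "h' \<in> H" "(h', h) \<in> \<sigma>" "ple m y (st h')"
    using sigma_adjust_star[OF h(1) kx(1) ux(1)] kx(2) ux(2) y_eq by auto
  with h(2) show ?thesis
    unfolding proj_act_defined_iff using y_eq plus_in_projs by (blast intro: sigma_trans sigma_sym)
qed

lemma proj_act_mono:
  assumes x: "x \<in> E" and le: "ple m x y"
    and v: "proj_act m pl st H (qclass \<sigma> b) y = Some v"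
  shows "\<exists>u. proj_act m pl st H (qclass \<sigma> b) x = Some u \<and> ple m u v"
proof -
  obtain k where y: "y \<in> E" and k: "k \<in> H" "(b, k) \<in> \<sigma>" "ple m y (st k)"
    and v_eq: "v = pl (m k y)"
    using v by (rule proj_act_SomeE)
  have "ple m x (st k)"
    using le k(3) unfolding ple_def by (metis mult_assoc)
  then have "proj_act m pl st H (qclass \<sigma> b) x = Some (pl (m k x))"
    using proj_act_eq[OF k(1,2) x] by simp
  moreover have "m k x = m (m k y) x"
    using le projs_mult_comm[OF x y] unfolding ple_def by (simp add: mult_assoc)
  then have "ple m (pl (m k x)) v"
    using plus_mult_le[of "m k y" x] v_eq by simp
  ultimately show ?thesis by blast
qed

lemma proj_act_partial_action:
  "partial_action (UNIV // \<sigma>) (qmul m \<sigma>) (qclass \<sigma> one) E (proj_act m pl st H)"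
  unfolding partial_action_def
proof (intro conjI ballI allI impI)
  show "y \<in> E" if "t \<in> UNIV // \<sigma>" "proj_act m pl st H t x = Some y" for t x y
    using that by (auto elim!: quotientE proj_act_SomeE simp flip: qclass_def intro: plus_in_projs)
  show "proj_act m pl st H (qclass \<sigma> one) x = Some x" if "x \<in> E" for x
    using that by (rule proj_act_one)
  show "proj_act m pl st H (qmul m \<sigma> s t) x = Some z"
    if "s \<in> UNIV // \<sigma>" "t \<in> UNIV // \<sigma>"
      "proj_act m pl st H t x = Some y" "proj_act m pl st H s y = Some z" for s t x y z
    using that by (auto elim!: quotientE simp flip: qclass_def
        simp: qmul_qclass[OF sigma_monoid_congruence] intro: proj_act_comp)
qed

lemma proj_act_strong_partial_action:
  "strong_partial_action (UNIV // \<sigma>) (qmul m \<sigma>) (qclass \<sigma> one) E (proj_act m pl st H)"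
  unfolding strong_partial_action_def
proof (intro ballI allI impI)
  fix s t x y
  assume "s \<in> UNIV // \<sigma>" "t \<in> UNIV // \<sigma>"
    and "proj_act m pl st H t x = Some y" "proj_act m pl st H (qmul m \<sigma> s t) x \<noteq> None"
  moreover obtain a b where "s = qclass \<sigma> a" "t = qclass \<sigma> b"
    using calculation(1,2) by (auto elim!: quotientE simp flip: qclass_def)
  ultimately show "proj_act m pl st H s y \<noteq> None"
    by (metis proj_act_strong qmul_qclass sigma_monoid_congruence)
qed

lemma proj_act_order_preserving:
  "order_preserving_action (UNIV // \<sigma>) E (ple m) (proj_act m pl st H)"
  unfolding order_preserving_action_def
  by (auto elim!: quotientE simp flip: qclass_def intro: proj_act_mono)

end

theorem mainTheorem19:
  fixes m :: "'a \<Rightarrow> 'a \<Rightarrow> 'a" and one :: 'a and pl st :: "'a \<Rightarrow> 'a" and H :: "'a set"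
  assumes "star_left_ehresmann m one pl st"
    and "proper_basis m pl st H"
  shows "(\<forall>h\<in>H. \<forall>k\<in>H. \<forall>e\<in>projs pl. (h, k) \<in> sigma m pl \<and> ple m e (st h) \<and> ple m e (st k)
            \<longrightarrow> m h e = m k e)
    \<and> partial_action (UNIV // sigma m pl) (qmul m (sigma m pl)) (qclass (sigma m pl) one)
        (projs pl) (proj_act m pl st H)
    \<and> strong_partial_action (UNIV // sigma m pl) (qmul m (sigma m pl)) (qclass (sigma m pl) one)
        (projs pl) (proj_act m pl st H)
    \<and> order_preserving_action (UNIV // sigma m pl) (projs pl) (ple m) (proj_act m pl st H)
    \<and> (\<forall>t. \<exists>e\<in>projs pl. proj_act m pl st H (qclass (sigma m pl) t) e \<noteq> None)"
proof -
  interpret proper_atomic_subset m one pl st H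
    using assms by unfold_locales (simp_all add: proper_basis_def)
  show ?thesis
    using sigma_restrict_eq proj_act_partial_action proj_act_strong_partial_action
      proj_act_order_preserving proj_act_some_defined
    by blast
qed

end
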